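(* Let $\mathfrak{g}$ be a finite-dimensional real Lie algebra and let $h\colon \mathfrak{g}^{*} \to \mathbb{R}$ be smooth. Fix a choice of sign $\pm$ and define $\mathbf{M}_{\pm}\colon T^{*}\mathfrak{g} = \mathfrak{g}\times\mathfrak{g}^{*} \to \mathfrak{g}^{*}$ by $\mathbf{M}_{\pm}(q,p) = \mp\operatorname{ad}_{q}^{*}p$, and $H\colon T^{*}\mathfrak{g} \to \mathbb{R}$ by $H(q,p) = h(\mathbf{M}_{\pm}(q,p)) = h(\mp\operatorname{ad}_{q}^{*}p)$. Let $t \mapsto (q(t),p(t))$ be a solution of the canonical Hamiltonian system $\dot{q} = \partial H/\partial p$, $\dot{p} = -\partial H/\partial q$ on $T^{*}\mathfrak{g} \cong T^{*}\mathbb{R}^{n}$. Then $t \mapsto \mu(t) := \mathbf{M}_{\pm}(q(t),p(t))$ is a solution of the Lie--Poisson equation $$\dot{\mu} = \mp\operatorname{ad}_{Dh(\mu)}^{*}\mu .$$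
   Context: $n = \dim\mathfrak{g}$; $\langle\cdot,\cdot\rangle$ is the natural pairing $\mathfrak{g}^{*}\times\mathfrak{g}\to\mathbb{R}$. For $x \in \mathfrak{g}$, $\operatorname{ad}_{x}y = [x,y]$ and $\operatorname{ad}_{x}^{*}\colon\mathfrak{g}^{*}\to\mathfrak{g}^{*}$ is its dual, $\langle \operatorname{ad}_{x}^{*}\alpha, y\rangle = \langle \alpha, [x,y]\rangle$. $T^{*}\mathfrak{g}$ is identified with $\mathfrak{g}\times\mathfrak{g}^{*}$ and carries the canonical symplectic structure; in a basis $\{E_i\}$ of $\mathfrak{g}$ with dual basis, $q = q^{i}E_i$, $p = p_i E^{i}_{*}$ and Hamilton's equations are $\dot q^{i} = \partial H/\partial p_i$, $\dot p_i = -\partial H/\partial q^{i}$. For smooth $f\colon\mathfrak{g}^{*}\to\mathbb{R}$, $Df(\mu)\in\mathfrak{g}$ is defined by $\langle \delta\mu, Df(\mu)\rangle = \frac{d}{ds}\big|_{s=0} f(\mu+s\delta\mu)$ for all $\delta\mu\in\mathfrak{g}^{*}$. The equation $\dot\mu = \mp\operatorname{ad}^{*}_{Dh(\mu)}\mu$ is the Hamiltonian equation of $h$ with respect to the $(\pm)$-Lie--Poisson bracket $\{f,g\}_{\pm}(\mu) = \pm\langle \mu, [Df(\mu), Dg(\mu)]\rangle$. *)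

theory Defs
  imports "HOL-Analysis.Analysis"
begin

text \<open>A finite-dimensional real Lie algebra, realised on the coordinate space
  real^'n (a basis E_i fixed); the dual space g* is identified with real^'n via the
  dual basis, so that the natural pairing is the dot product.\<close>

definition lie_bracket :: "(real^'n \<Rightarrow> real^'n \<Rightarrow> real^'n) \<Rightarrow> bool" where
  "lie_bracket br \<longleftrightarrow>
     bilinear br \<and>
     (\<forall>x. br x x = 0) \<and>
     (\<forall>x y z. br x (br y z) + br y (br z x) + br z (br x y) = 0)"

definition pair :: "real^'n \<Rightarrow> real^'n \<Rightarrow> real" where
  "pair \<alpha> y = \<alpha> \<bullet> y"

definition ad_star :: "(real^'n \<Rightarrow> real^'n \<Rightarrow> real^'n) \<Rightarrow> real^'n \<Rightarrow> real^'n \<Rightarrow> real^'n" where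
  "ad_star br x \<alpha> = (THE \<beta>. \<forall>y. pair \<beta> y = pair \<alpha> (br x y))"

definition Dfun :: "(real^'n \<Rightarrow> real) \<Rightarrow> real^'n \<Rightarrow> real^'n" where
  "Dfun f \<mu> = (THE x. \<forall>\<delta>. ((\<lambda>s. f (\<mu> + s *\<^sub>R \<delta>)) has_real_derivative pair \<delta> x) (at 0))"

fun Ck :: "nat \<Rightarrow> (real^'n \<Rightarrow> real) \<Rightarrow> bool" where
  "Ck 0 f = continuous_on UNIV f"
| "Ck (Suc k) f = (f differentiable_on UNIV \<and> continuous_on UNIV f \<and>
       (\<forall>v. Ck k (\<lambda>x. frechet_derivative f (at x) v)))"

definition smooth :: "(real^'n \<Rightarrow> real) \<Rightarrow> bool" where
  "smooth f \<longleftrightarrow> (\<forall>k. Ck k f)"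

definition dH_dq :: "(real^'n \<Rightarrow> real^'n \<Rightarrow> real) \<Rightarrow> real^'n \<Rightarrow> real^'n \<Rightarrow> 'n \<Rightarrow> real" where
  "dH_dq H q p i = deriv (\<lambda>s. H (q + s *\<^sub>R axis i 1) p) 0"

definition dH_dp :: "(real^'n \<Rightarrow> real^'n \<Rightarrow> real) \<Rightarrow> real^'n \<Rightarrow> real^'n \<Rightarrow> 'n \<Rightarrow> real" where
  "dH_dp H q p i = deriv (\<lambda>s. H q (p + s *\<^sub>R axis i 1)) 0"

definition hamiltonian_solution ::
  "(real^'n \<Rightarrow> real^'n \<Rightarrow> real) \<Rightarrow> real set \<Rightarrow> (real \<Rightarrow> real^'n) \<Rightarrow> (real \<Rightarrow> real^'n) \<Rightarrow> bool" where
  "hamiltonian_solution H T q p \<longleftrightarrow>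
     (\<forall>t\<in>T. (q has_vector_derivative (\<chi> i. dH_dp H (q t) (p t) i)) (at t) \<and>
            (p has_vector_derivative (\<chi> i. - dH_dq H (q t) (p t) i)) (at t))"

end

theory Submission
  imports Defs
begin

text \<open>The map \<open>\<mu>(q, p) = c ad\<^sup>*\<^sub>q p\<close> is the momentum map of the cotangent lift of
  the adjoint action.  For the collective Hamiltonian \<open>H = h \<circ> \<mu>\<close>, Hamilton's equations read
  \<open>q' = c [q, \<xi>]\<close> and \<open>p' = c ad\<^sup>*\<^sub>\<xi> p\<close> with \<open>\<xi> = Dh(\<mu>)\<close>.  By the product rule
  \<open>\<mu>' = c\<^sup>2 (ad\<^sup>*\<^sub>q ad\<^sup>*\<^sub>\<xi> p + ad\<^sup>*\<^bsub>[q,\<xi>]\<^esub> p)\<close>, and the Jacobi identity in the form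
  \<open>ad\<^sup>*\<^bsub>[x,y]\<^esub> = ad\<^sup>*\<^sub>y ad\<^sup>*\<^sub>x - ad\<^sup>*\<^sub>x ad\<^sup>*\<^sub>y\<close> collapses this to
  \<open>c\<^sup>2 ad\<^sup>*\<^sub>\<xi> ad\<^sup>*\<^sub>q p = c ad\<^sup>*\<^sub>\<xi> \<mu>\<close>.\<close>

lemma ad_star_eq_adjoint:
  assumes "linear (br x)"
  shows "ad_star br x = adjoint (br x)"
proof
  fix \<alpha>
  have adjoint_pair: "pair (adjoint (br x) \<alpha>) y = pair \<alpha> (br x y)" for y
    using adjoint_clauses(2)[OF assms] by (simp add: pair_def)
  show "ad_star br x \<alpha> = adjoint (br x) \<alpha>"
    unfolding ad_star_def
  proof (rule the_equality)
    fix \<beta> assume "\<forall>y. pair \<beta> y = pair \<alpha> (br x y)"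
    then show "\<beta> = adjoint (br x) \<alpha>"
      using adjoint_pair by (intro vector_eq_rdot[THEN iffD1]) (simp add: pair_def)
  qed (use adjoint_pair in blast)
qed

lemma inner_ad_star:
  assumes "bilinear br"
  shows "ad_star br x \<alpha> \<bullet> y = \<alpha> \<bullet> br x y"
  using assms by (simp add: bilinear_def ad_star_eq_adjoint adjoint_clauses(2))

lemma bilinear_ad_star:
  assumes "bilinear br"
  shows "bilinear (ad_star br)"
proof -
  have "ad_star br x (a + b) = ad_star br x a + ad_star br x b"
    and "ad_star br x (c *\<^sub>R a) = c *\<^sub>R ad_star br x a"
    and "ad_star br (a + b) x = ad_star br a x + ad_star br b x"
    and "ad_star br (c *\<^sub>R a) x = c *\<^sub>R ad_star br a x" for x a b c
    by (rule vector_eq_rdot[THEN iffD1],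
        simp add: inner_ad_star[OF assms] inner_add_left inner_add_right
          bilinear_ladd[OF assms] bilinear_lmul[OF assms])+
  then show ?thesis
    unfolding bilinear_def by (auto intro!: linearI)
qed

lemma lie_bracket_imp_bilinear: "lie_bracket br \<Longrightarrow> bilinear br"
  unfolding lie_bracket_def by blast

lemma lie_bracket_antisym:
  assumes "lie_bracket br"
  shows "br y x = - br x y"
proof -
  note bl = lie_bracket_imp_bilinear[OF assms]
  have alt: "\<And>x. br x x = 0"
    using assms unfolding lie_bracket_def by blast
  have "br x x + br x y + br y x + br y y = br (x + y) (x + y)"
    by (simp add: bilinear_ladd[OF bl] bilinear_radd[OF bl])
  then have "br x y + br y x = 0" by (simp add: alt)
  then show ?thesis by (simp add: eq_neg_iff_add_eq_0 add.commute)
qed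

lemma lie_bracket_jacobi_derivation:
  assumes "lie_bracket br"
  shows "br x (br y z) = br y (br x z) + br (br x y) z"
proof -
  note bl = lie_bracket_imp_bilinear[OF assms]
  have jac: "br x (br y z) + br y (br z x) + br z (br x y) = 0"
    using assms unfolding lie_bracket_def by blast
  have "br y (br z x) = - br y (br x z)"
    using lie_bracket_antisym[OF assms, of x z] bilinear_rneg[OF bl] by simp
  moreover have "br z (br x y) = - br (br x y) z"
    by (rule lie_bracket_antisym[OF assms])
  moreover have "br x (br y z) = - (br y (br z x) + br z (br x y))"
    using jac by (simp only: add.assoc eq_neg_iff_add_eq_0)
  ultimately show ?thesis by simp
qed

lemma ad_star_bracket:
  assumes "lie_bracket br"
  shows "ad_star br (br x y) \<alpha> = ad_star br y (ad_star br x \<alpha>) - ad_star br x (ad_star br y \<alpha>)"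
proof -
  note bl = lie_bracket_imp_bilinear[OF assms]
  show ?thesis
  proof (rule vector_eq_rdot[THEN iffD1], rule allI)
    fix z
    have "\<alpha> \<bullet> br (br x y) z = \<alpha> \<bullet> br x (br y z) - \<alpha> \<bullet> br y (br x z)"
      unfolding lie_bracket_jacobi_derivation[OF assms, of x y z] by (simp add: inner_add_right)
    then show "ad_star br (br x y) \<alpha> \<bullet> z
        = (ad_star br y (ad_star br x \<alpha>) - ad_star br x (ad_star br y \<alpha>)) \<bullet> z"
      by (simp only: inner_diff_left inner_ad_star[OF bl])
  qed
qed

lemma has_real_derivative_along_line:
  assumes "(h has_derivative h') (at m)"
  shows "((\<lambda>s. h (m + s *\<^sub>R v)) has_real_derivative h' v) (at 0)"
proof -
  have "((\<lambda>s::real. m + s *\<^sub>R v) has_derivative (\<lambda>s. s *\<^sub>R v)) (at 0)"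
    by (auto intro!: derivative_eq_intros)
  from has_derivative_compose[OF this, of h] assms
  have "((\<lambda>s. h (m + s *\<^sub>R v)) has_derivative (\<lambda>s. h' (s *\<^sub>R v))) (at 0)"
    by simp
  moreover have "(\<lambda>s. h' (s *\<^sub>R v)) = (\<lambda>s. h' v * s)"
    using linear_scale[OF has_derivative_linear[OF assms]] by (simp add: mult.commute)
  ultimately show ?thesis
    by (simp only: has_field_derivative_def)
qed

lemma Dfun_eq_adjoint:
  fixes h :: "real^'n \<Rightarrow> real"
  assumes "(h has_derivative h') (at m)"
  shows "Dfun h m = adjoint h' 1"
proof -
  have along_line: "((\<lambda>s. h (m + s *\<^sub>R \<delta>)) has_real_derivative pair \<delta> (adjoint h' 1)) (at 0)"
    for \<delta>
    using has_real_derivative_along_line[OF assms, of \<delta>]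
      adjoint_works[OF has_derivative_linear[OF assms], of \<delta> 1]
    by (simp add: pair_def)
  show ?thesis
    unfolding Dfun_def
  proof (rule the_equality)
    fix x
    assume "\<forall>\<delta>. ((\<lambda>s. h (m + s *\<^sub>R \<delta>)) has_real_derivative pair \<delta> x) (at 0)"
    then have "\<delta> \<bullet> x = \<delta> \<bullet> adjoint h' 1" for \<delta>
      using DERIV_unique[OF _ along_line] unfolding pair_def by blast
    then show "x = adjoint h' 1"
      using vector_eq_ldot by blast
  qed (use along_line in blast)
qed

lemma deriv_along_line_Dfun:
  fixes h :: "real^'n \<Rightarrow> real"
  assumes "h differentiable (at m)"
  shows "deriv (\<lambda>s. h (m + s *\<^sub>R v)) 0 = v \<bullet> Dfun h m"
proof -
  obtain h' where h': "(h has_derivative h') (at m)"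
    using assms by (auto simp: differentiable_def)
  have "h' v = v \<bullet> Dfun h m"
    using adjoint_works[OF has_derivative_linear[OF h']] by (simp add: Dfun_eq_adjoint[OF h'])
  then show ?thesis
    using DERIV_imp_deriv[OF has_real_derivative_along_line[OF h']] by simp
qed

lemma smooth_imp_differentiable:
  assumes "smooth h"
  shows "h differentiable (at x)"
proof -
  have "Ck (Suc 0) h" using assms unfolding smooth_def by blast
  then show ?thesis by (simp add: differentiable_on_eq_differentiable_at)
qed

lemma dH_dp_collective:
  fixes h :: "real^'n \<Rightarrow> real"
  assumes "bilinear br"
    and "h differentiable (at (c *\<^sub>R ad_star br Q P))"
  shows "(\<chi> i. dH_dp (\<lambda>q p. h (c *\<^sub>R ad_star br q p)) Q P i)
    = c *\<^sub>R br Q (Dfun h (c *\<^sub>R ad_star br Q P))"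
proof -
  let ?\<mu> = "c *\<^sub>R ad_star br Q P"
  have bl: "bilinear (ad_star br)" by (rule bilinear_ad_star[OF assms(1)])
  have "dH_dp (\<lambda>q p. h (c *\<^sub>R ad_star br q p)) Q P i = (c *\<^sub>R br Q (Dfun h ?\<mu>)) $ i" for i
  proof -
    have line: "(\<lambda>s. h (c *\<^sub>R ad_star br Q (P + s *\<^sub>R axis i 1)))
        = (\<lambda>s. h (?\<mu> + s *\<^sub>R (c *\<^sub>R ad_star br Q (axis i 1))))"
      by (simp add: bilinear_radd[OF bl] bilinear_rmul[OF bl] algebra_simps)
    have "dH_dp (\<lambda>q p. h (c *\<^sub>R ad_star br q p)) Q P i
        = (c *\<^sub>R ad_star br Q (axis i 1)) \<bullet> Dfun h ?\<mu>"
      unfolding dH_dp_def line by (rule deriv_along_line_Dfun[OF assms(2)])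
    then show ?thesis
      by (simp add: inner_ad_star[OF assms(1)] inner_axis')
  qed
  then show ?thesis by (simp add: vec_eq_iff)
qed

lemma dH_dq_collective:
  fixes h :: "real^'n \<Rightarrow> real"
  assumes "lie_bracket br"
    and "h differentiable (at (c *\<^sub>R ad_star br Q P))"
  shows "(\<chi> i. - dH_dq (\<lambda>q p. h (c *\<^sub>R ad_star br q p)) Q P i)
    = c *\<^sub>R ad_star br (Dfun h (c *\<^sub>R ad_star br Q P)) P"
proof -
  let ?\<mu> = "c *\<^sub>R ad_star br Q P" and ?\<xi> = "Dfun h (c *\<^sub>R ad_star br Q P)"
  note bl = lie_bracket_imp_bilinear[OF assms(1)]
  have bla: "bilinear (ad_star br)" by (rule bilinear_ad_star[OF bl])
  have "- dH_dq (\<lambda>q p. h (c *\<^sub>R ad_star br q p)) Q P i = (c *\<^sub>R ad_star br ?\<xi> P) $ i" for i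
  proof -
    have line: "(\<lambda>s. h (c *\<^sub>R ad_star br (Q + s *\<^sub>R axis i 1) P))
        = (\<lambda>s. h (?\<mu> + s *\<^sub>R (c *\<^sub>R ad_star br (axis i 1) P)))"
      by (simp add: bilinear_ladd[OF bla] bilinear_lmul[OF bla] algebra_simps)
    have "dH_dq (\<lambda>q p. h (c *\<^sub>R ad_star br q p)) Q P i
        = (c *\<^sub>R ad_star br (axis i 1) P) \<bullet> ?\<xi>"
      unfolding dH_dq_def line by (rule deriv_along_line_Dfun[OF assms(2)])
    also have "\<dots> = c * (P \<bullet> br (axis i 1) ?\<xi>)"
      by (simp add: inner_ad_star[OF bl])
    also have "\<dots> = - (c *\<^sub>R ad_star br ?\<xi> P) $ i"
      using inner_ad_star[OF bl, of ?\<xi> P "axis i 1"]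
      by (simp add: lie_bracket_antisym[OF assms(1), of "axis i 1" ?\<xi>] inner_axis)
    finally show ?thesis by simp
  qed
  then show ?thesis by (simp add: vec_eq_iff)
qed

lemma collective_hamiltonian_solution_lie_poisson:
  fixes h :: "real^'n \<Rightarrow> real"
  assumes br: "lie_bracket br"
    and sol: "hamiltonian_solution (\<lambda>q p. h (c *\<^sub>R ad_star br q p)) T q p"
    and "t \<in> T"
    and h: "h differentiable (at (c *\<^sub>R ad_star br (q t) (p t)))"
  shows "((\<lambda>t. c *\<^sub>R ad_star br (q t) (p t)) has_vector_derivative
      c *\<^sub>R ad_star br (Dfun h (c *\<^sub>R ad_star br (q t) (p t))) (c *\<^sub>R ad_star br (q t) (p t))) (at t)"
proof -
  define \<xi> where "\<xi> = Dfun h (c *\<^sub>R ad_star br (q t) (p t))"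
  note bl = lie_bracket_imp_bilinear[OF br]
  have bla: "bilinear (ad_star br)" by (rule bilinear_ad_star[OF bl])
  have q': "(q has_vector_derivative c *\<^sub>R br (q t) \<xi>) (at t)"
    and p': "(p has_vector_derivative c *\<^sub>R ad_star br \<xi> (p t)) (at t)"
    using sol \<open>t \<in> T\<close> dH_dp_collective[OF bl h] dH_dq_collective[OF br h]
    unfolding hamiltonian_solution_def \<xi>_def by auto
  have "((\<lambda>t. ad_star br (q t) (p t)) has_vector_derivative
      ad_star br (q t) (c *\<^sub>R ad_star br \<xi> (p t)) + ad_star br (c *\<^sub>R br (q t) \<xi>) (p t)) (at t)"
    using bounded_bilinear.has_vector_derivative[OF _ q' p'] bla
    by (simp add: bilinear_conv_bounded_bilinear)
  also have "ad_star br (q t) (c *\<^sub>R ad_star br \<xi> (p t)) + ad_star br (c *\<^sub>R br (q t) \<xi>) (p t)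
      = c *\<^sub>R ad_star br \<xi> (ad_star br (q t) (p t))"
    by (simp add: bilinear_rmul[OF bla] bilinear_lmul[OF bla] ad_star_bracket[OF br] algebra_simps)
  finally have "((\<lambda>t. c *\<^sub>R ad_star br (q t) (p t)) has_vector_derivative
      c *\<^sub>R c *\<^sub>R ad_star br \<xi> (ad_star br (q t) (p t))) (at t)"
    by (rule bounded_linear.has_vector_derivative[OF bounded_linear_scaleR_right])
  then show ?thesis
    unfolding \<xi>_def[symmetric] by (simp add: bilinear_rmul[OF bla])
qed

theorem theorem3p1:
  fixes br :: "real^'n \<Rightarrow> real^'n \<Rightarrow> real^'n"
    and h :: "real^'n \<Rightarrow> real"
    and \<sigma> :: real
    and T :: "real set"
    and q p :: "real \<Rightarrow> real^'n"
  assumes "lie_bracket br"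
    and "smooth h"
    and "\<sigma> = 1 \<or> \<sigma> = -1"
    and "open T"
    and "hamiltonian_solution (\<lambda>q p. h (- \<sigma> *\<^sub>R ad_star br q p)) T q p"
  shows "\<forall>t\<in>T. ((\<lambda>t. - \<sigma> *\<^sub>R ad_star br (q t) (p t)) has_vector_derivative
            (- \<sigma> *\<^sub>R ad_star br (Dfun h (- \<sigma> *\<^sub>R ad_star br (q t) (p t)))
                               (- \<sigma> *\<^sub>R ad_star br (q t) (p t)))) (at t)"
  using collective_hamiltonian_solution_lie_poisson[OF assms(1) assms(5) _
      smooth_imp_differentiable[OF assms(2)]]
  by blast

end
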